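(* Let $X$ be a pointed fibrant space over $B$ with section $s_X:B\to X$. Then $\mathrm{cat}^*_B(X)=\mathrm{secat}(s_X)$.
   Context: A fibrewise space over $B$ is a space $X$ with a map $p_X:X\to B$; a fibrewise pointed space is one with a section $s_X:B\to X$ of $p_X$. It is a pointed fibrant space over $B$ if moreover $p_X$ is a Hurewicz fibration. A fibrewise homotopy is a homotopy $H:U\times[0,1]\to X$ with $p_X(H(u,t))=p_U(u)$ for all $t$; write $\simeq_B$. $\mathrm{cat}^*_B(X)$ (fibrewise unpointed LS category): least $n$ such that $X$ is covered by $n+1$ open sets $U_i$ with the inclusion $U_i\hookrightarrow X$ fibrewise homotopic to $s_X\circ p_X|_{U_i}$ ($\infty$ if none). $\mathrm{secat}(g)$ for a map $g:Y\to Z$: least $n$ such that $Z$ is covered by $n+1$ open sets $U$ each admitting a map $s:U\to Y$ with $g\circ s$ homotopic to the inclusion $U\hookrightarrow Z$ ($\infty$ if none). *)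

theory Defs
  imports "HOL-Analysis.Analysis" "HOL-Library.Extended_Nat"
begin

definition hurewicz_fibration :: "'a topology \<Rightarrow> 'b topology \<Rightarrow> ('a \<Rightarrow> 'b) \<Rightarrow> bool" where
  "hurewicz_fibration X B p \<longleftrightarrow>
     continuous_map X B p \<and>
     (\<forall>(Z :: ('a \<times> real) topology) f G.
        continuous_map Z X f \<and>
        continuous_map (prod_topology (top_of_set {0..1::real}) Z) B G \<and>
        (\<forall>z\<in>topspace Z. G (0, z) = p (f z))
        \<longrightarrow> (\<exists>F. continuous_map (prod_topology (top_of_set {0..1::real}) Z) X F \<and>
                 (\<forall>z\<in>topspace Z. F (0, z) = f z) \<and>
                 (\<forall>t\<in>{0..1}. \<forall>z\<in>topspace Z. p (F (t, z)) = G (t, z))))"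

definition pointed_fibrant :: "'a topology \<Rightarrow> 'b topology \<Rightarrow> ('a \<Rightarrow> 'b) \<Rightarrow> ('b \<Rightarrow> 'a) \<Rightarrow> bool" where
  "pointed_fibrant X B p s \<longleftrightarrow>
     continuous_map X B p \<and> continuous_map B X s \<and>
     (\<forall>b\<in>topspace B. p (s b) = b) \<and> hurewicz_fibration X B p"

definition fw_homotopic_on :: "'a topology \<Rightarrow> ('a \<Rightarrow> 'b) \<Rightarrow> 'a set \<Rightarrow> ('a \<Rightarrow> 'a) \<Rightarrow> ('a \<Rightarrow> 'a) \<Rightarrow> bool" where
  "fw_homotopic_on X p U f g \<longleftrightarrow>
     homotopic_with (\<lambda>k. \<forall>u\<in>U. p (k u) = p u) (subtopology X U) X f g"

text \<open>Fibrewise unpointed LS category \<open>cat\<^sup>*\<^sub>B(X)\<close> (\<open>\<infinity>\<close> if no such cover exists).\<close>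
definition fw_cat :: "'a topology \<Rightarrow> ('a \<Rightarrow> 'b) \<Rightarrow> ('b \<Rightarrow> 'a) \<Rightarrow> enat" where
  "fw_cat X p s = (INF n \<in> {n. \<exists>U :: nat \<Rightarrow> 'a set.
        (\<forall>i\<le>n. openin X (U i) \<and> fw_homotopic_on X p (U i) id (s \<circ> p)) \<and>
        topspace X \<subseteq> (\<Union>i\<le>n. U i)}. enat n)"

text \<open>Sectional category of \<open>g : Y \<rightarrow> Z\<close> (\<open>\<infinity>\<close> if no such cover exists).\<close>
definition secat :: "'c topology \<Rightarrow> 'd topology \<Rightarrow> ('c \<Rightarrow> 'd) \<Rightarrow> enat" where
  "secat Y Z g = (INF n \<in> {n. \<exists>U :: nat \<Rightarrow> 'd set.
        (\<forall>i\<le>n. openin Z (U i) \<and>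
           (\<exists>\<sigma>. continuous_map (subtopology Z (U i)) Y \<sigma> \<and>
                homotopic_with (\<lambda>_. True) (subtopology Z (U i)) Z (g \<circ> \<sigma>) id)) \<and>
        topspace Z \<subseteq> (\<Union>i\<le>n. U i)}. enat n)"

end

theory Submission
  imports Defs
begin

text \<open>
  Suppose \<open>s \<circ> \<sigma> \<simeq> id\<close> on an open \<open>U \<subseteq> X\<close> via a homotopy \<open>H\<close>. Then \<open>H\<close> and \<open>s \<circ> p \<circ> H\<close> cover
  the same homotopy \<open>p \<circ> H\<close> of \<open>B\<close> and start at the same map \<open>s \<circ> \<sigma>\<close>. Running \<open>H\<close> backwards and
  then \<open>s \<circ> p \<circ> H\<close> forwards gives, for each \<open>x \<in> U\<close>, a path from \<open>x\<close> to \<open>s (p x)\<close> whose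
  projection retraces itself; lifting the contraction of this retraced path through the
  fibration deforms it into a path in the fibre over \<open>p x\<close>, i.e. \<open>id \<simeq>\<^sub>B s \<circ> p\<close> on \<open>U\<close>.
  Conversely a fibrewise homotopy \<open>id \<simeq>\<^sub>B s \<circ> p\<close> exhibits \<open>p\<close> itself as a homotopy section
  of \<open>s\<close> over \<open>U\<close>. So both invariants are infima over the same open covers.
\<close>

lemma continuous_map_join_homotopies:
  assumes k1: "continuous_map (prod_topology (top_of_set {0..1}) Y) X k1"
    and k2: "continuous_map (prod_topology (top_of_set {0..1}) Y) X k2"
    and k12: "\<And>y. y \<in> topspace Y \<Longrightarrow> k1 (1, y) = k2 (0, y)"
  shows "continuous_map (prod_topology Y (top_of_set {0..1::real})) X
           (\<lambda>(y, t). if t \<le> 1/2 then k1 (2 * t, y) else k2 (2 * t - 1, y))"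
proof -
  let ?Z = "prod_topology Y (top_of_set {0..1::real})"
  have snd: "continuous_map ?Z euclideanreal snd"
    using continuous_map_snd continuous_map_in_subtopology by blast
  have "continuous_map ?Z X
          (\<lambda>z. if snd z \<le> 1/2 then k1 (2 * snd z, fst z) else k2 (2 * snd z - 1, fst z))"
  proof (rule continuous_map_cases_le)
    show "continuous_map (subtopology ?Z {z \<in> topspace ?Z. snd z \<le> 1/2}) X (\<lambda>z. k1 (2 * snd z, fst z))"
      apply (intro snd continuous_map_compose [OF _ k1, unfolded o_def] continuous_map_pairedI
          continuous_intros continuous_map_into_subtopology continuous_map_from_subtopology | simp)+
      by auto
    show "continuous_map (subtopology ?Z {z \<in> topspace ?Z. 1/2 \<le> snd z}) X (\<lambda>z. k2 (2 * snd z - 1, fst z))"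
      apply (intro snd continuous_map_compose [OF _ k2, unfolded o_def] continuous_map_pairedI
          continuous_intros continuous_map_into_subtopology continuous_map_from_subtopology | simp)+
      by auto
  qed (auto simp: snd k12 mult.commute)
  then show ?thesis
    by (simp add: case_prod_unfold)
qed

text \<open>\<open>X\<close> and \<open>Y\<close> share their point type because \<open>hurewicz_fibration\<close> only lifts
  homotopies parametrised by spaces of points of type \<open>'a \<times> real\<close>.\<close>
lemma hurewicz_fibration_fibrewise_homotopy_of_lifts:
  fixes X Y :: "'a topology"
  assumes fib: "hurewicz_fibration X B p"
    and k1: "continuous_map (prod_topology (top_of_set {0..1::real}) Y) X k1"
    and k2: "continuous_map (prod_topology (top_of_set {0..1::real}) Y) X k2"
    and start: "\<And>y. y \<in> topspace Y \<Longrightarrow> k1 (0, y) = k2 (0, y)"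
    and over: "\<And>t y. t \<in> {0..1} \<Longrightarrow> y \<in> topspace Y \<Longrightarrow> p (k1 (t, y)) = p (k2 (t, y))"
  obtains K where "continuous_map (prod_topology (top_of_set {0..1::real}) Y) X K"
    and "\<And>y. y \<in> topspace Y \<Longrightarrow> K (0, y) = k1 (1, y)"
    and "\<And>y. y \<in> topspace Y \<Longrightarrow> K (1, y) = k2 (1, y)"
    and "\<And>t y. t \<in> {0..1} \<Longrightarrow> y \<in> topspace Y \<Longrightarrow> p (K (t, y)) = p (k1 (1, y))"
proof -
  define I where "I = top_of_set {0..1::real}"
  define Z where "Z = prod_topology Y I"
  have tZ: "topspace Z = topspace Y \<times> {0..1}"
    by (simp add: Z_def I_def)
  define f where "f = (\<lambda>(y, t). if t \<le> 1/2 then k1 (1 - 2 * t, y) else k2 (2 * t - 1, y))"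
  have "continuous_map (prod_topology I Y) (prod_topology I Y) (\<lambda>z. (1 - fst z, snd z))"
    by (auto intro!: continuous_map_pairedI continuous_intros
        continuous_map_into_fulltopology [OF continuous_map_fst]
        simp: I_def continuous_map_in_subtopology)
  then have rev: "continuous_map (prod_topology I Y) X (\<lambda>z. k1 (1 - fst z, snd z))"
    using continuous_map_compose [OF _ k1] unfolding I_def o_def by blast
  have fc: "continuous_map Z X f"
    using continuous_map_join_homotopies [OF rev[unfolded I_def] k2] start
    by (simp add: f_def Z_def I_def cong: if_cong)
  text \<open>\<open>f (y, -)\<close> runs \<open>k1\<close> backwards and then \<open>k2\<close>; its projection retraces itself, and
    \<open>G\<close> contracts it onto the constant path at \<open>p (k1 (1, y))\<close>.\<close>
  define G where "G = (\<lambda>(\<tau>, y, t). p (k1 (min 1 (\<bar>1 - 2 * t\<bar> + 2 * \<tau>), y)))"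
  have pc: "continuous_map X B p"
    using fib by (simp add: hurewicz_fibration_def)
  have \<tau>_cont: "continuous_map (prod_topology I Z) euclideanreal fst"
    unfolding I_def by (rule continuous_map_into_fulltopology [OF continuous_map_fst])
  have t_cont: "continuous_map (prod_topology I Z) euclideanreal (\<lambda>w. snd (snd w))"
    using continuous_map_compose [OF continuous_map_snd continuous_map_snd]
    unfolding Z_def I_def o_def by (rule continuous_map_into_fulltopology)
  have y_cont: "continuous_map (prod_topology I Z) Y (\<lambda>w. fst (snd w))"
    using continuous_map_compose [OF continuous_map_snd continuous_map_fst]
    unfolding Z_def o_def .
  have "continuous_map (prod_topology I Z) I (\<lambda>w. min 1 (\<bar>1 - 2 * snd (snd w)\<bar> + 2 * fst w))"
    unfolding I_def continuous_map_in_subtopology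
    apply (intro conjI continuous_intros \<tau>_cont[unfolded I_def] t_cont[unfolded I_def])
    by (auto simp: Z_def)
  then have "continuous_map (prod_topology I Z) (prod_topology I Y)
               (\<lambda>w. (min 1 (\<bar>1 - 2 * snd (snd w)\<bar> + 2 * fst w), fst (snd w)))"
    using y_cont by (intro continuous_map_pairedI)
  then have Gc: "continuous_map (prod_topology I Z) B G"
    using continuous_map_compose [OF _ continuous_map_compose [OF k1 pc]]
    unfolding G_def I_def o_def case_prod_unfold by blast
  have Gf: "G (0, z) = p (f z)" if "z \<in> topspace Z" for z
    using that over[of "2 * snd z - 1" "fst z"] by (auto simp: tZ G_def f_def)
  have "\<exists>F. continuous_map (prod_topology I Z) X F \<and> (\<forall>z\<in>topspace Z. F (0, z) = f z) \<and>
          (\<forall>\<tau>\<in>{0..1}. \<forall>z\<in>topspace Z. p (F (\<tau>, z)) = G (\<tau>, z))"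
    using fib[unfolded hurewicz_fibration_def, THEN conjunct2, rule_format, of Z f G] fc Gc Gf
    unfolding I_def by blast
  then obtain F where Fc: "continuous_map (prod_topology I Z) X F"
    and F0: "\<And>z. z \<in> topspace Z \<Longrightarrow> F (0, z) = f z"
    and FG: "\<And>\<tau> z. \<tau> \<in> {0..1} \<Longrightarrow> z \<in> topspace Z \<Longrightarrow> p (F (\<tau>, z)) = G (\<tau>, z)"
    by blast
  text \<open>The path \<open>t \<mapsto> (min t (1 - t), y, t)\<close> joins the two ends of \<open>f (y, -)\<close> through the
    region where \<open>G\<close> is constant, so \<open>F\<close> is vertical along it.\<close>
  define K where "K = (\<lambda>(t, y). F (min t (1 - t), (y, t)))"
  show thesis
  proof
    have "continuous_map (prod_topology I Y) I (\<lambda>w. min (fst w) (1 - fst w))"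
      unfolding I_def continuous_map_in_subtopology
      apply (intro conjI continuous_intros continuous_map_into_fulltopology [OF continuous_map_fst])
      by auto
    then have "continuous_map (prod_topology I Y) (prod_topology I Z) (\<lambda>w. (min (fst w) (1 - fst w), snd w, fst w))"
      unfolding Z_def by (intro continuous_map_pairedI continuous_map_fst continuous_map_snd)
    then show "continuous_map (prod_topology (top_of_set {0..1}) Y) X K"
      using continuous_map_compose [OF _ Fc]
      unfolding K_def I_def o_def case_prod_unfold by blast
    show "K (0, y) = k1 (1, y)" "K (1, y) = k2 (1, y)" if "y \<in> topspace Y" for y
      using that F0 by (auto simp: K_def f_def tZ)
    show "p (K (t, y)) = p (k1 (1, y))" if "t \<in> {0..1}" "y \<in> topspace Y" for t y
      using that FG[of "min t (1 - t)" "(y, t)"] by (auto simp: K_def G_def tZ min_def abs_if)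
  qed
qed

lemma fw_homotopic_on_id_if_homotopy_section:
  fixes X :: "'a topology"
  assumes pf: "pointed_fibrant X B p s" and U: "U \<subseteq> topspace X"
    and \<sigma>: "continuous_map (subtopology X U) B \<sigma>"
    and hom: "homotopic_with (\<lambda>_. True) (subtopology X U) X (s \<circ> \<sigma>) id"
  shows "fw_homotopic_on X p U id (s \<circ> p)"
proof -
  define XU where "XU = subtopology X U"
  have tXU: "topspace XU = U"
    using U by (simp add: XU_def Int_absorb1)
  have pc: "continuous_map X B p" and sc: "continuous_map B X s"
    and ps: "\<And>b. b \<in> topspace B \<Longrightarrow> p (s b) = b" and fib: "hurewicz_fibration X B p"
    using pf by (auto simp: pointed_fibrant_def)
  obtain H where Hc: "continuous_map (prod_topology (top_of_set {0..1::real}) XU) X H"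
    and H0: "\<And>x. H (0, x) = s (\<sigma> x)" and H1: "\<And>x. H (1, x) = x"
    using hom unfolding homotopic_with_def XU_def by auto
  have H_in: "H (t, x) \<in> topspace X" if "t \<in> {0..1}" "x \<in> U" for t x
    using Hc that tXU by (auto simp: continuous_map_def Pi_iff)
  have "continuous_map (prod_topology (top_of_set {0..1}) XU) X (s \<circ> p \<circ> H)"
    using Hc pc sc by (auto intro: continuous_map_compose)
  moreover have "H (0, x) = (s \<circ> p \<circ> H) (0, x)" if "x \<in> topspace XU" for x
    using \<sigma> that ps by (auto simp: H0 XU_def continuous_map_def Pi_iff)
  moreover have "p (H (t, x)) = p ((s \<circ> p \<circ> H) (t, x))" if "t \<in> {0..1}" "x \<in> topspace XU" for t x
    using H_in that tXU pc ps by (auto simp: continuous_map_def Pi_iff)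
  ultimately obtain K where Kc: "continuous_map (prod_topology (top_of_set {0..1::real}) XU) X K"
    and K0: "\<And>x. x \<in> topspace XU \<Longrightarrow> K (0, x) = H (1, x)"
    and K1: "\<And>x. x \<in> topspace XU \<Longrightarrow> K (1, x) = (s \<circ> p \<circ> H) (1, x)"
    and Kp: "\<And>t x. t \<in> {0..1} \<Longrightarrow> x \<in> topspace XU \<Longrightarrow> p (K (t, x)) = p (H (1, x))"
    using hurewicz_fibration_fibrewise_homotopy_of_lifts [OF fib Hc] by blast
  have "homotopic_with (\<lambda>k. \<forall>u\<in>U. p (k u) = p u) XU X (\<lambda>x. K (0, x)) (\<lambda>x. K (1, x))"
    unfolding homotopic_with_def using Kc Kp by (auto simp: tXU H1)
  then show ?thesis
    unfolding fw_homotopic_on_def XU_def[symmetric]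
    by (rule homotopic_with_eq) (auto simp: K0 K1 H1 tXU)
qed

lemma fw_homotopic_on_id_iff_homotopy_section:
  fixes X :: "'a topology"
  assumes pf: "pointed_fibrant X B p s" and U: "U \<subseteq> topspace X"
  shows "fw_homotopic_on X p U id (s \<circ> p) \<longleftrightarrow>
    (\<exists>\<sigma>. continuous_map (subtopology X U) B \<sigma> \<and>
         homotopic_with (\<lambda>_. True) (subtopology X U) X (s \<circ> \<sigma>) id)"
proof
  assume h: "fw_homotopic_on X p U id (s \<circ> p)"
  have "continuous_map (subtopology X U) B p"
    using pf by (simp add: pointed_fibrant_def continuous_map_from_subtopology)
  moreover have "homotopic_with (\<lambda>_. True) (subtopology X U) X (s \<circ> p) id"
    using h unfolding fw_homotopic_on_def
    by (metis (mono_tags, lifting) homotopic_with_mono homotopic_with_sym)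
  ultimately show "\<exists>\<sigma>. continuous_map (subtopology X U) B \<sigma> \<and>
                     homotopic_with (\<lambda>_. True) (subtopology X U) X (s \<circ> \<sigma>) id"
    by blast
qed (use fw_homotopic_on_id_if_homotopy_section [OF pf U] in blast)

theorem corollary2p10:
  fixes X :: "'a topology" and B :: "'b topology"
    and p :: "'a \<Rightarrow> 'b" and s :: "'b \<Rightarrow> 'a"
  assumes "pointed_fibrant X B p s"
  shows "fw_cat X p s = secat B X s"
proof -
  have "fw_homotopic_on X p U id (s \<circ> p) \<longleftrightarrow>
    (\<exists>\<sigma>. continuous_map (subtopology X U) B \<sigma> \<and>
         homotopic_with (\<lambda>_. True) (subtopology X U) X (s \<circ> \<sigma>) id)"
    if "openin X U" for U
    using fw_homotopic_on_id_iff_homotopy_section [OF assms openin_subset [OF that]] .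
  then show ?thesis
    unfolding fw_cat_def secat_def by (simp cong: conj_cong)
qed

end
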